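(* For $\mathbf{x}=(x_1,\dots,x_N)^{\mathrm T}\in\mathbb{R}^N$ define $$\ell_{\mathrm{osb}}(\mathbf{x})=\Big(\sum_{n=1}^N x_n^2\Big)\Big(\sum_{n=1}^N x_n^4\Big)-\Big(\sum_{n=1}^N x_n^3\Big)^2.$$ Then $\ell_{\mathrm{osb}}(\mathbf{x})\ge0$ for all $\mathbf{x}$, and $\ell_{\mathrm{osb}}(\mathbf{x})=0$ if and only if $\mathbf{x}\in\{0,\alpha\}^N$ for some $\alpha\in\mathbb{R}$. Furthermore, $\ell_{\mathrm{osb}}$ has no spurious stationary points: $\nabla\ell_{\mathrm{osb}}(\mathbf{x})=\mathbf{0}$ holds only if $\mathbf{x}\in\{0,\alpha\}^N$ for some $\alpha\in\mathbb{R}$.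
   Context: A spurious stationary point of a differentiable function $\ell$ whose zero set is $\mathcal{X}$ is a point $\mathbf{x}\notin\mathcal{X}$ with $\nabla\ell(\mathbf{x})=\mathbf{0}$. *)

theory Defs
  imports "HOL-Analysis.Analysis"
begin

text \<open>x in R^N is modelled as x :: real ^ 'n, with N = CARD('n).\<close>

definition l_osb :: "real ^ 'n \<Rightarrow> real" where
  "l_osb x = (\<Sum>n\<in>UNIV. (x $ n) ^ 2) * (\<Sum>n\<in>UNIV. (x $ n) ^ 4)
             - (\<Sum>n\<in>UNIV. (x $ n) ^ 3) ^ 2"

definition in_zero_alpha_set :: "real ^ 'n \<Rightarrow> bool" where
  "in_zero_alpha_set x \<longleftrightarrow> (\<exists>\<alpha>::real. \<forall>n. x $ n \<in> {0, \<alpha>})"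

end

theory Submission
  imports Defs
begin

text \<open>
  With \<open>u\<^sub>n = x\<^sub>n\<close> and \<open>v\<^sub>n = x\<^sub>n\<^sup>2\<close>, \<open>l_osb\<close> is the Cauchy-Schwarz defect
  \<open>|u|\<^sup>2 |v|\<^sup>2 - (u \<bullet> v)\<^sup>2\<close>, which by Lagrange's identity is half the sum of the squares
  \<open>(x\<^sub>i x\<^sub>j (x\<^sub>j - x\<^sub>i))\<^sup>2\<close>. Hence it is nonnegative and vanishes exactly when any two
  nonzero entries agree. Being homogeneous of degree 6, it satisfies Euler's relation
  \<open>\<nabla>l_osb(x) \<bullet> x = 6 l_osb(x)\<close>, so every stationary point is a zero.
\<close>

lemma lagrange_identity:
  fixes u v :: "'a \<Rightarrow> 'b::comm_ring_1"
  shows "2 * ((\<Sum>i\<in>A. u i ^ 2) * (\<Sum>i\<in>A. v i ^ 2) - (\<Sum>i\<in>A. u i * v i) ^ 2)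
       = (\<Sum>i\<in>A. \<Sum>j\<in>A. (u i * v j - u j * v i) ^ 2)"
proof -
  have "(\<Sum>i\<in>A. \<Sum>j\<in>A. (u i * v j - u j * v i) ^ 2)
      = (\<Sum>i\<in>A. \<Sum>j\<in>A. u i ^ 2 * v j ^ 2 + u j ^ 2 * v i ^ 2 - 2 * ((u i * v i) * (u j * v j)))"
    by (intro sum.cong refl) (simp add: power2_eq_square algebra_simps)
  also have "\<dots> = (\<Sum>i\<in>A. \<Sum>j\<in>A. u i ^ 2 * v j ^ 2) + (\<Sum>i\<in>A. \<Sum>j\<in>A. u j ^ 2 * v i ^ 2)
      - 2 * (\<Sum>i\<in>A. \<Sum>j\<in>A. (u i * v i) * (u j * v j))"
    by (simp add: sum.distrib sum_subtractf sum_distrib_left)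
  also have "\<dots> = 2 * ((\<Sum>i\<in>A. u i ^ 2) * (\<Sum>i\<in>A. v i ^ 2) - (\<Sum>i\<in>A. u i * v i) ^ 2)"
    unfolding sum_product[symmetric] sum.swap[of "\<lambda>i j. u j ^ 2 * v i ^ 2"]
    by (simp add: power2_eq_square algebra_simps)
  finally show ?thesis by simp
qed

lemma l_osb_lagrange:
  "2 * l_osb x = (\<Sum>i\<in>UNIV. \<Sum>j\<in>UNIV. (x$i * x$j * (x$j - x$i)) ^ 2)"
proof -
  have "2 * l_osb x = (\<Sum>i\<in>UNIV. \<Sum>j\<in>UNIV. (x$i * (x$j)\<^sup>2 - x$j * (x$i)\<^sup>2) ^ 2)"
    using lagrange_identity[where u = "\<lambda>n. x$n" and v = "\<lambda>n. (x$n)\<^sup>2" and A = UNIV]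
    by (simp add: l_osb_def power2_eq_square power3_eq_cube power4_eq_xxxx mult.assoc)
  also have "\<dots> = (\<Sum>i\<in>UNIV. \<Sum>j\<in>UNIV. (x$i * x$j * (x$j - x$i)) ^ 2)"
    by (intro sum.cong refl) (simp add: power2_eq_square algebra_simps)
  finally show ?thesis .
qed

lemma l_osb_nonneg: "l_osb x \<ge> 0"
proof -
  have "0 \<le> (\<Sum>i\<in>UNIV. \<Sum>j\<in>UNIV. (x$i * x$j * (x$j - x$i)) ^ 2)"
    by (intro sum_nonneg) simp
  then show ?thesis
    using l_osb_lagrange[of x] by linarith
qed

lemma in_zero_alpha_set_iff:
  "in_zero_alpha_set x \<longleftrightarrow> (\<forall>i j. x$i = 0 \<or> x$j = 0 \<or> x$i = x$j)"
proof
  assume "in_zero_alpha_set x"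
  then obtain \<alpha> where "\<forall>n. x$n \<in> {0, \<alpha>}"
    unfolding in_zero_alpha_set_def by blast
  then show "\<forall>i j. x$i = 0 \<or> x$j = 0 \<or> x$i = x$j"
    by auto
next
  assume pairwise: "\<forall>i j. x$i = 0 \<or> x$j = 0 \<or> x$i = x$j"
  show "in_zero_alpha_set x"
  proof (cases "\<exists>k. x$k \<noteq> 0")
    case True
    then obtain k where "x$k \<noteq> 0" by blast
    then have "\<forall>n. x$n \<in> {0, x$k}"
      using pairwise by blast
    then show ?thesis
      unfolding in_zero_alpha_set_def by blast
  next
    case False
    then show ?thesis
      unfolding in_zero_alpha_set_def by auto
  qed
qed

lemma l_osb_eq_0_iff: "l_osb x = 0 \<longleftrightarrow> in_zero_alpha_set x"
proof -
  have "l_osb x = 0 \<longleftrightarrow> (\<Sum>i\<in>UNIV. \<Sum>j\<in>UNIV. (x$i * x$j * (x$j - x$i)) ^ 2) = 0"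
    using l_osb_lagrange[of x] by linarith
  also have "\<dots> \<longleftrightarrow> (\<forall>i j. x$i * x$j * (x$j - x$i) = 0)"
    by (simp add: sum_nonneg_eq_0_iff sum_nonneg)
  also have "\<dots> \<longleftrightarrow> in_zero_alpha_set x"
    unfolding in_zero_alpha_set_iff by auto
  finally show ?thesis .
qed

lemma l_osb_scaleR: "l_osb (t *\<^sub>R x) = t ^ 6 * l_osb x"
proof -
  have "(\<Sum>n\<in>UNIV. ((t *\<^sub>R x) $ n) ^ k) = t ^ k * (\<Sum>n\<in>UNIV. (x $ n) ^ k)" for k
    by (simp add: power_mult_distrib sum_distrib_left)
  then show ?thesis
    unfolding l_osb_def by (simp add: algebra_simps power_mult_distrib)
qed

lemma homogeneous_critical_point_eq_0:
  fixes f :: "'a::real_normed_vector \<Rightarrow> real"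
  assumes homogeneous: "\<And>t. f (t *\<^sub>R x) = t ^ k * f x"
    and "k > 0"
    and critical: "(f has_derivative (\<lambda>h. 0)) (at x)"
  shows "f x = 0"
proof -
  have ray: "((\<lambda>t::real. t *\<^sub>R x) has_derivative (\<lambda>h. h *\<^sub>R x)) (at 1)"
    by (auto intro!: derivative_eq_intros)
  have "((\<lambda>t. f (t *\<^sub>R x)) has_derivative (\<lambda>h. 0)) (at 1)"
    using has_derivative_compose[OF ray, of f "\<lambda>h. 0"] critical by simp
  moreover have "((\<lambda>t. f (t *\<^sub>R x)) has_derivative (\<lambda>h. h * (real k * f x))) (at 1)"
    unfolding homogeneous by (auto intro!: derivative_eq_intros)
  ultimately have "(\<lambda>h::real. 0) = (\<lambda>h. h * (real k * f x))"
    by (rule has_derivative_unique)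
  then have "real k * f x = 0"
    by (metis mult_1)
  then show ?thesis
    using \<open>k > 0\<close> by simp
qed

theorem mainTheorem4:
  shows "(\<forall>x::real ^ 'n. l_osb x \<ge> 0)
       \<and> (\<forall>x::real ^ 'n. l_osb x = 0 \<longleftrightarrow> in_zero_alpha_set x)
       \<and> (\<forall>x::real ^ 'n. (l_osb has_derivative (\<lambda>h. 0)) (at x) \<longrightarrow> in_zero_alpha_set x)"
  using l_osb_nonneg l_osb_eq_0_iff
    homogeneous_critical_point_eq_0[of l_osb _ 6, OF l_osb_scaleR]
  by auto

end
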